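(* Let $D$ be a positive integer and let $H$ be a multigraph (loopless, parallel edges allowed) with $\Delta(H)\le D$. Suppose that each edge of $H$ shares at least one endpoint with all but at most $D-2$ of the other edges of $H$. Then $|E(H)|\le \frac52 D$.
   Context: Degrees in a multigraph count edges with multiplicity. *)

theory Defs
  imports Complex_Main
begin

text \<open>A finite loopless multigraph: a finite set E of edge identifiers, each edge e
having a set ends e of exactly two distinct endpoints. Parallel edges are distinct
identifiers with the same ends.\<close>

definition loopless_multigraph :: "'e set \<Rightarrow> ('e \<Rightarrow> 'v set) \<Rightarrow> bool" where
  "loopless_multigraph E ends \<longleftrightarrow> finite E \<and> (\<forall>e\<in>E. card (ends e) = 2)"

definition mdegree :: "'e set \<Rightarrow> ('e \<Rightarrow> 'v set) \<Rightarrow> 'v \<Rightarrow> nat" where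
  "mdegree E ends v = card {e \<in> E. v \<in> ends e}"

definition max_degree_le :: "'e set \<Rightarrow> ('e \<Rightarrow> 'v set) \<Rightarrow> nat \<Rightarrow> bool" where
  "max_degree_le E ends D \<longleftrightarrow> (\<forall>v. mdegree E ends v \<le> D)"

definition disjoint_edges :: "'e set \<Rightarrow> ('e \<Rightarrow> 'v set) \<Rightarrow> 'e \<Rightarrow> 'e set" where
  "disjoint_edges E ends e = {f \<in> E - {e}. ends f \<inter> ends e = {}}"

end

theory Submission
  imports Defs
begin

text \<open>Assume 2|E| > 5D and pick a vertex z of minimum degree \<delta>, with k neighbours among
n vertices. An edge zy meets d(z) + d(y) - \<mu>(zy) edges, where \<mu>(zy) counts the parallel copies
of zy, so the hypothesis gives d(y) \<ge> |E| - D + 2 - \<delta> + \<mu>(zy). Summing over the neighbours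
y, with \<Sum> \<mu>(zy) = \<delta>, bounds their degree sum below by k(|E| - D + 2 - \<delta>) + \<delta>. Together
with n\<delta> \<le> 2|E| \<le> nD and d \<le> D this is an inconsistent system of integer inequalities:
if 2k \<le> n + 1 the consequence \<delta> \<ge> |E| - 2D + 2 contradicts it, otherwise n\<delta> \<le> 2|E| does.\<close>

definition vertices :: "'e set \<Rightarrow> ('e \<Rightarrow> 'v set) \<Rightarrow> 'v set" where
  "vertices E ends = \<Union>(ends ` E)"

definition neighbours :: "'e set \<Rightarrow> ('e \<Rightarrow> 'v set) \<Rightarrow> 'v \<Rightarrow> 'v set" where
  "neighbours E ends z = {y. \<exists>f\<in>E. z \<in> ends f \<and> y \<in> ends f \<and> y \<noteq> z}"

definition multiplicity :: "'e set \<Rightarrow> ('e \<Rightarrow> 'v set) \<Rightarrow> 'v \<Rightarrow> 'v \<Rightarrow> nat" where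
  "multiplicity E ends u v = card {f\<in>E. ends f = {u, v}}"

lemma counting_bound_few_neighbours:
  fixes m D n k \<delta> :: int
  assumes "0 \<le> D" and "3 \<le> k" and "6 \<le> n" and few: "2 * k \<le> n + 1"
    and \<delta>_lower: "m - 2 * D + 2 \<le> \<delta>"
    and main: "k * (m - D + 2) + (n + 1 - 2 * k) * \<delta> \<le> 2 * m"
  shows "2 * m \<le> 5 * D"
proof (rule ccontr)
  assume "\<not> 2 * m \<le> 5 * D"
  define c where "c = m - 2 * D + 2"
  have "(n + 1 - 2 * k) * c \<le> (n + 1 - 2 * k) * \<delta>"
    using \<delta>_lower few unfolding c_def by (intro mult_left_mono) linarith+
  moreover have "k * (m - D + 2) + (n + 1 - 2 * k) * c = k * D + (n + 1 - k) * c"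
    unfolding c_def by (simp add: algebra_simps)
  ultimately have "k * D + (n + 1 - k) * c \<le> 2 * m" using main by linarith
  moreover have "3 * D \<le> k * D" using assms by (intro mult_right_mono) linarith+
  moreover have "4 * c \<le> (n + 1 - k) * c"
    using assms \<open>\<not> 2 * m \<le> 5 * D\<close> unfolding c_def by (intro mult_right_mono) linarith+
  ultimately show False using \<open>\<not> 2 * m \<le> 5 * D\<close> c_def by linarith
qed

lemma counting_bound_many_neighbours:
  fixes m D n k \<delta> :: int
  assumes "0 \<le> D" and k: "1 \<le> k" "k < n" and "6 \<le> n" and many: "n + 1 < 2 * k"
    and sum_ge: "n * \<delta> \<le> 2 * m"
    and main: "k * (m - D + 2) + (n + 1 - 2 * k) * \<delta> \<le> 2 * m"
  shows "2 * m \<le> 5 * D"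
proof (rule ccontr)
  assume big: "\<not> 2 * m \<le> 5 * D"
  have "(2 * k - n - 1) * (n * \<delta>) \<le> (2 * k - n - 1) * (2 * m)"
    using sum_ge many by (intro mult_left_mono) linarith+
  moreover have "n * (k * (m - D + 2) + (n + 1 - 2 * k) * \<delta>) \<le> n * (2 * m)"
    using main \<open>6 \<le> n\<close> by (intro mult_left_mono) linarith+
  moreover have "n * (k * (m - D + 2) + (n + 1 - 2 * k) * \<delta>) + (2 * k - n - 1) * (n * \<delta>)
      = n * k * (m - D + 2)" "n * (2 * m) + (2 * k - n - 1) * (2 * m) = 2 * m * (2 * k - 1)"
    by (simp_all add: algebra_simps)
  ultimately have "n * k * (m - D + 2) \<le> 2 * m * (2 * k - 1)" by linarith
  moreover have "n * k * (3 * m + 11) \<le> n * k * (5 * m - 5 * D + 10)"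
    using big \<open>6 \<le> n\<close> k by (intro mult_left_mono) auto
  moreover have "n * k * (5 * m - 5 * D + 10) = 5 * (n * k * (m - D + 2))"
    "2 * m * (2 * k - 1) * 5 = m * (20 * k - 10)" by (simp_all add: algebra_simps)
  ultimately have "n * k * (3 * m + 11) \<le> m * (20 * k - 10)" by linarith
  moreover have "20 * k - 10 \<le> 3 * (n * k)"
  proof (cases "7 \<le> n")
    case True
    hence "7 * k \<le> n * k" using k by (intro mult_right_mono) linarith+
    thus ?thesis using k by linarith
  next
    case False
    hence "n = 6" "k \<le> 5" using \<open>6 \<le> n\<close> k by auto
    thus ?thesis by simp
  qed
  hence "m * (20 * k - 10) \<le> m * (3 * (n * k))"
    using big \<open>0 \<le> D\<close> by (intro mult_left_mono) linarith+
  moreover have "0 < n * k" using \<open>6 \<le> n\<close> k by simp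
  ultimately show False by (simp add: algebra_simps)
qed

text \<open>m = |E|, n = number of vertices, k = number of neighbours of a vertex of minimum
degree \<delta>, S = degree sum over these neighbours.\<close>

lemma counting_bound:
  fixes m D n k \<delta> S :: int
  assumes sum_le: "2 * m \<le> n * D" and sum_ge: "n * \<delta> \<le> 2 * m"
    and \<delta>: "0 \<le> \<delta>" "\<delta> \<le> D" and k: "1 \<le> k" "k < n"
    and S_lower: "k * (m - D + 2 - \<delta>) + \<delta> \<le> S" and S_upper: "S \<le> k * D"
    and S_split: "S + (n - k) * \<delta> \<le> 2 * m"
  shows "2 * m \<le> 5 * D"
proof (rule ccontr)
  assume big: "\<not> 2 * m \<le> 5 * D"
  have "6 \<le> n"
  proof (rule ccontr)
    assume "\<not> 6 \<le> n"
    hence "n * D \<le> 5 * D" using \<delta> by (intro mult_right_mono) linarith+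
    thus False using big sum_le by linarith
  qed
  have "3 \<le> k"
  proof (rule ccontr)
    assume "\<not> 3 \<le> k"
    hence "k = 1 \<or> k = 2" using k by linarith
    thus False using S_lower S_upper big \<delta> by auto
  qed
  have "k * (m - D + 2 - \<delta>) \<le> k * D" using S_lower S_upper \<delta> by linarith
  hence \<delta>_lower: "m - 2 * D + 2 \<le> \<delta>" using k by (simp add: mult_le_cancel_left)
  have "k * (m - D + 2) + (n + 1 - 2 * k) * \<delta> = k * (m - D + 2 - \<delta>) + \<delta> + (n - k) * \<delta>"
    by (simp add: algebra_simps)
  hence main: "k * (m - D + 2) + (n + 1 - 2 * k) * \<delta> \<le> 2 * m"
    using S_lower S_split by linarith
  have "0 \<le> D" using \<delta> by linarith
  show False
  proof (cases "2 * k \<le> n + 1")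
    case True
    with counting_bound_few_neighbours[OF \<open>0 \<le> D\<close> \<open>3 \<le> k\<close> \<open>6 \<le> n\<close> _ \<delta>_lower main] big
    show False by blast
  next
    case False
    with counting_bound_many_neighbours[OF \<open>0 \<le> D\<close> k \<open>6 \<le> n\<close> _ sum_ge main] big
    show False by linarith
  qed
qed

lemma card_2_eq_doubleton:
  assumes "card S = 2" "u \<in> S" "v \<in> S" "u \<noteq> v"
  shows "S = {u, v}"
proof -
  obtain x y where "S = {x, y}" "x \<noteq> y" using assms(1) unfolding card_2_iff by blast
  thus ?thesis using assms by auto
qed

context
  fixes E :: "'e set" and ends :: "'e \<Rightarrow> 'v set"
  assumes multigraph: "loopless_multigraph E ends"
begin

lemma finite_edges: "finite E"
  using multigraph unfolding loopless_multigraph_def by simp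

lemma card_ends: "e \<in> E \<Longrightarrow> card (ends e) = 2"
  using multigraph unfolding loopless_multigraph_def by simp

lemma finite_vertices: "finite (vertices E ends)"
proof -
  have "finite (ends e)" if "e \<in> E" for e
    using card_ends[OF that] by (intro card_ge_0_finite) simp
  thus ?thesis unfolding vertices_def using finite_edges by blast
qed

lemma ends_eq_if_mem:
  assumes "f \<in> E" "z \<in> ends f" "y \<in> ends f" "y \<noteq> z"
  shows "ends f = {z, y}"
  using card_2_eq_doubleton[OF card_ends] assms by metis

lemma sum_mdegree_vertices: "(\<Sum>v\<in>vertices E ends. mdegree E ends v) = 2 * card E"
proof -
  let ?V = "vertices E ends"
  have "(\<Sum>v\<in>?V. mdegree E ends v) = (\<Sum>v\<in>?V. \<Sum>e\<in>E. of_bool (v \<in> ends e))"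
    using finite_edges by (simp add: mdegree_def Int_def)
  also have "\<dots> = (\<Sum>e\<in>E. \<Sum>v\<in>?V. of_bool (v \<in> ends e))"
    by (rule sum.swap)
  also have "\<dots> = (\<Sum>e\<in>E. card (ends e))"
  proof (rule sum.cong[OF refl])
    fix e assume "e \<in> E"
    hence "?V \<inter> {v. v \<in> ends e} = ends e" unfolding vertices_def by auto
    thus "(\<Sum>v\<in>?V. of_bool (v \<in> ends e)) = card (ends e)"
      using finite_vertices by simp
  qed
  also have "\<dots> = 2 * card E" using card_ends by simp
  finally show ?thesis .
qed

lemma neighbours_subset_vertices: "neighbours E ends z \<subseteq> vertices E ends - {z}"
  unfolding neighbours_def vertices_def by auto

lemma finite_neighbours: "finite (neighbours E ends z)"
  using finite_subset[OF neighbours_subset_vertices] finite_vertices by blast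

lemma card_neighbours_less:
  assumes "z \<in> vertices E ends"
  shows "card (neighbours E ends z) < card (vertices E ends)"
  using neighbours_subset_vertices assms finite_vertices by (intro psubset_card_mono) auto

lemma neighbours_nonempty:
  assumes "z \<in> vertices E ends"
  shows "neighbours E ends z \<noteq> {}"
proof -
  obtain f where f: "f \<in> E" "z \<in> ends f" using assms unfolding vertices_def by blast
  obtain y where "y \<in> ends f" "y \<noteq> z"
    using card_ends[OF f(1)] unfolding card_2_iff by blast
  thus ?thesis using f unfolding neighbours_def by blast
qed

lemma mdegree_eq_sum_multiplicity:
  "mdegree E ends z = (\<Sum>y\<in>neighbours E ends z. multiplicity E ends z y)"
proof -
  let ?N = "neighbours E ends z"
  have "{f\<in>E. z \<in> ends f} = (\<Union>y\<in>?N. {f\<in>E. ends f = {z, y}})"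
  proof
    show "{f\<in>E. z \<in> ends f} \<subseteq> (\<Union>y\<in>?N. {f\<in>E. ends f = {z, y}})"
    proof
      fix f assume f: "f \<in> {f\<in>E. z \<in> ends f}"
      then obtain a b where "ends f = {a, b}" "a \<noteq> b"
        using card_ends unfolding card_2_iff by blast
      then obtain y where y: "y \<in> ends f" "y \<noteq> z" by blast
      hence "y \<in> ?N" using f unfolding neighbours_def by blast
      thus "f \<in> (\<Union>y\<in>?N. {f\<in>E. ends f = {z, y}})"
        using f y ends_eq_if_mem by blast
    qed
  qed auto
  also have "card \<dots> = (\<Sum>y\<in>?N. multiplicity E ends z y)"
    unfolding multiplicity_def
    by (rule card_UN_disjoint[OF finite_neighbours])
      (use finite_edges in \<open>auto simp: doubleton_eq_iff\<close>)
  finally show ?thesis unfolding mdegree_def .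
qed

lemma card_disjoint_edges_add_mdegree:
  assumes "e \<in> E" "ends e = {u, v}" "u \<noteq> v"
  shows "card (disjoint_edges E ends e) + mdegree E ends u + mdegree E ends v
         = card E + multiplicity E ends u v"
proof -
  let ?A = "{f\<in>E. u \<in> ends f}" and ?B = "{f\<in>E. v \<in> ends f}"
  have A_Int_B: "?A \<inter> ?B = {f\<in>E. ends f = {u, v}}"
    using ends_eq_if_mem[of _ u v] assms(3) by auto
  have disjoint: "disjoint_edges E ends e = E - (?A \<union> ?B)"
    unfolding disjoint_edges_def using assms(2) by auto
  have "card ?A + card ?B = card (?A \<union> ?B) + card (?A \<inter> ?B)"
    using finite_edges by (intro card_Un_Int) auto
  moreover have "card (E - (?A \<union> ?B)) + card (?A \<union> ?B) = card E"
    using finite_edges card_Diff_subset[of "?A \<union> ?B" E] card_mono[of E "?A \<union> ?B"]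
    by (simp add: finite_subset)
  ultimately show ?thesis
    unfolding mdegree_def multiplicity_def disjoint A_Int_B[symmetric] by linarith
qed

lemma sum_mdegree_split_neighbours:
  fixes z :: 'v
  assumes "\<forall>v\<in>vertices E ends. mdegree E ends z \<le> mdegree E ends v"
  defines "N \<equiv> neighbours E ends z"
  shows "(\<Sum>y\<in>N. mdegree E ends y) + (card (vertices E ends) - card N) * mdegree E ends z
         \<le> 2 * card E"
proof -
  let ?V = "vertices E ends"
  have "N \<subseteq> ?V" using neighbours_subset_vertices unfolding N_def by blast
  have "\<And>v. v \<in> ?V - N \<Longrightarrow> mdegree E ends z \<le> mdegree E ends v"
    using assms(1) by blast
  hence "card (?V - N) * mdegree E ends z \<le> (\<Sum>v\<in>?V - N. mdegree E ends v)"
    using sum_bounded_below[of "?V - N" "mdegree E ends z" "mdegree E ends"] by simp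
  moreover have "card (?V - N) = card ?V - card N"
    by (rule card_Diff_subset[OF finite_subset[OF \<open>N \<subseteq> ?V\<close> finite_vertices] \<open>N \<subseteq> ?V\<close>])
  ultimately have "(card ?V - card N) * mdegree E ends z \<le> (\<Sum>v\<in>?V - N. mdegree E ends v)"
    by simp
  moreover have "(\<Sum>v\<in>?V. mdegree E ends v)
      = (\<Sum>v\<in>?V - N. mdegree E ends v) + (\<Sum>y\<in>N. mdegree E ends y)"
    by (rule sum.subset_diff[OF \<open>N \<subseteq> ?V\<close> finite_vertices])
  ultimately show ?thesis using sum_mdegree_vertices by linarith
qed

lemma sum_mdegree_neighbours_lower_bound:
  fixes z :: 'v
  assumes few_disjoint: "\<forall>e\<in>E. int (card (disjoint_edges E ends e)) \<le> int D - 2"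
  defines "N \<equiv> neighbours E ends z" and "\<delta> \<equiv> int (mdegree E ends z)"
  shows "int (card N) * (int (card E) - int D + 2 - \<delta>) + \<delta>
         \<le> (\<Sum>y\<in>N. int (mdegree E ends y))"
proof -
  have "int (card E) - int D + 2 - \<delta> + int (multiplicity E ends z y) \<le> int (mdegree E ends y)"
    if "y \<in> N" for y
  proof -
    obtain f where f: "f \<in> E" "z \<in> ends f" "y \<in> ends f" "y \<noteq> z"
      using \<open>y \<in> N\<close> unfolding N_def neighbours_def by blast
    have "int (card (disjoint_edges E ends f)) \<le> int D - 2" using few_disjoint f(1) by blast
    with card_disjoint_edges_add_mdegree[OF f(1) ends_eq_if_mem[OF f] f(4)[symmetric]]
    show ?thesis unfolding \<delta>_def by linarith
  qed
  hence "(\<Sum>y\<in>N. int (card E) - int D + 2 - \<delta> + int (multiplicity E ends z y))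
         \<le> (\<Sum>y\<in>N. int (mdegree E ends y))"
    by (rule sum_mono)
  moreover have "(\<Sum>y\<in>N. int (multiplicity E ends z y)) = \<delta>"
    unfolding \<delta>_def N_def mdegree_eq_sum_multiplicity by simp
  ultimately show ?thesis by (simp add: sum.distrib)
qed

lemma card_edges_bound_at_min_degree:
  assumes max_degree: "max_degree_le E ends D"
    and few_disjoint: "\<forall>e\<in>E. int (card (disjoint_edges E ends e)) \<le> int D - 2"
    and z: "z \<in> vertices E ends"
    and z_min: "\<forall>v\<in>vertices E ends. mdegree E ends z \<le> mdegree E ends v"
  shows "2 * card E \<le> 5 * D"
proof -
  let ?V = "vertices E ends" and ?N = "neighbours E ends z" and ?deg = "mdegree E ends"
  have deg_le: "?deg v \<le> D" for v
    using max_degree unfolding max_degree_le_def by blast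
  have "card ?N < card ?V" using card_neighbours_less[OF z] .
  have "2 * int (card E) \<le> 5 * int D"
  proof (rule counting_bound[where m = "int (card E)" and n = "int (card ?V)"
        and k = "int (card ?N)" and \<delta> = "int (?deg z)" and S = "\<Sum>y\<in>?N. int (?deg y)"])
    show "2 * int (card E) \<le> int (card ?V) * int D"
      using zle_int[THEN iffD2, OF sum_bounded_above[of ?V ?deg D]] deg_le sum_mdegree_vertices
      by simp
    show "int (card ?V) * int (?deg z) \<le> 2 * int (card E)"
      using zle_int[THEN iffD2, OF sum_bounded_below[of ?V "?deg z" ?deg]] z_min
        sum_mdegree_vertices
      by simp
    show "(\<Sum>y\<in>?N. int (?deg y)) \<le> int (card ?N) * int D"
      using zle_int[THEN iffD2, OF sum_bounded_above[of ?N ?deg D]] deg_le by simp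
    show "1 \<le> int (card ?N)"
      using neighbours_nonempty[OF z] finite_neighbours by (simp add: Suc_le_eq card_gt_0_iff)
    show "(\<Sum>y\<in>?N. int (?deg y)) + (int (card ?V) - int (card ?N)) * int (?deg z)
          \<le> 2 * int (card E)"
      using zle_int[THEN iffD2, OF sum_mdegree_split_neighbours[OF z_min]] \<open>card ?N < card ?V\<close>
      by (simp add: of_nat_diff)
    show "0 \<le> int (?deg z)" "int (?deg z) \<le> int D" "int (card ?N) < int (card ?V)"
      using deg_le[of z] \<open>card ?N < card ?V\<close> by simp_all
    show "int (card ?N) * (int (card E) - int D + 2 - int (?deg z)) + int (?deg z)
          \<le> (\<Sum>y\<in>?N. int (?deg y))"
      by (rule sum_mdegree_neighbours_lower_bound[OF few_disjoint])
  qed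
  thus ?thesis by linarith
qed

end

theorem theorem4:
  fixes E :: "'e set" and ends :: "'e \<Rightarrow> 'v set" and D :: nat
  assumes "D > 0"
    and "loopless_multigraph E ends"
    and "max_degree_le E ends D"
    and "\<forall>e\<in>E. int (card (disjoint_edges E ends e)) \<le> int D - 2"
  shows "real (card E) \<le> 5 / 2 * real D"
proof (cases "E = {}")
  case False
  note multigraph = \<open>loopless_multigraph E ends\<close>
  let ?V = "vertices E ends" and ?deg = "mdegree E ends"
  have "?V \<noteq> {}"
    using False card_ends[OF multigraph] unfolding vertices_def by fastforce
  define z where "z = arg_min_on ?deg ?V"
  have "z \<in> ?V" "\<forall>v\<in>?V. ?deg z \<le> ?deg v"
    using arg_min_if_finite[OF finite_vertices[OF multigraph] \<open>?V \<noteq> {}\<close>, of ?deg]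
    unfolding z_def by (auto simp: not_less)
  hence "2 * card E \<le> 5 * D"
    by (rule card_edges_bound_at_min_degree[OF multigraph assms(3,4)])
  thus ?thesis by linarith
qed simp

end
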